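(* Let $(V,w,\mu)$ be a simple weighted graph, let $d$ be a metric on $V$ inducing the discrete topology, and fix $\bar x\in V$. Assume all closed balls in $(V,d)$ are finite. If there exists an upper rate function $R(t)$ for the associated minimal Markov chain $(X_t)_{t\ge0}$ with respect to $d$, then $(X_t)_{t\ge0}$ is conservative.
   Context: A simple weighted graph $(V,w,\mu)$ consists of a countably infinite set $V$, a symmetric function $w:V\times V\to[0,\infty)$ and a function $\mu:V\to(0,\infty)$. The graph with edges $\{x\sim y:w(x,y)>0\}$ is assumed to be locally finite, connected, and without loops or multiple edges. The minimal Markov chain is the minimal continuous-time chain with $Q$-matrix $q_{xy}=w(x,y)/\mu(x)$ for $x\ne y$ and $q_{xx}=-\frac1{\mu(x)}\sum_y w(x,y)$. Equivalently, it is the Hunt process of the minimal regular Dirichlet form. Its lifetime $\zeta$ is the explosion time, after which the process sits at a cemetery point $\infty$. It is conservative if $\mathbb P_x(\zeta<\infty)=0$ for all $x\in V$. A nonnegative increasing function $R(t)$ is an upper rate function with respect to $d$ if there exists a random time $T<\zeta$ such that $\mathbb P_{\bar x}\big(d(X_t,\bar x)\le R(t)\text{ for all }T\le t<\zeta\big)=1$. *)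

theory Defs
  imports "HOL-Probability.Probability"
begin

definition simple_weighted_graph :: "'a set \<Rightarrow> ('a \<Rightarrow> 'a \<Rightarrow> real) \<Rightarrow> ('a \<Rightarrow> real) \<Rightarrow> bool" where
  "simple_weighted_graph V w \<mu> \<longleftrightarrow>
     countable V \<and> infinite V \<and>
     (\<forall>x y. w x y = w y x) \<and>
     (\<forall>x y. 0 \<le> w x y) \<and>
     (\<forall>x y. 0 < w x y \<longrightarrow> x \<in> V \<and> y \<in> V) \<and>
     (\<forall>x\<in>V. 0 < \<mu> x) \<and>
     (\<forall>x. w x x = 0) \<and>
     (\<forall>x\<in>V. finite {y. 0 < w x y}) \<and>
     (\<forall>x\<in>V. \<forall>y\<in>V. (x, y) \<in> {(a, b). 0 < w a b}\<^sup>*)"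

text \<open>Weighted degree and the total jump rate -q_xx = deg x / mu x.\<close>

definition wdeg :: "('a \<Rightarrow> 'a \<Rightarrow> real) \<Rightarrow> 'a \<Rightarrow> real" where
  "wdeg w x = (\<Sum>y\<in>{y. 0 < w x y}. w x y)"

definition jump_rate :: "('a \<Rightarrow> 'a \<Rightarrow> real) \<Rightarrow> ('a \<Rightarrow> real) \<Rightarrow> 'a \<Rightarrow> real" where
  "jump_rate w \<mu> x = wdeg w x / \<mu> x"

text \<open>Jump-chain transition probabilities q_xy / (-q_xx) = w x y / deg x.\<close>

definition jump_prob :: "('a \<Rightarrow> 'a \<Rightarrow> real) \<Rightarrow> 'a \<Rightarrow> 'a \<Rightarrow> real" where
  "jump_prob w x y = w x y / wdeg w x"

definition discrete_metric_on :: "'a set \<Rightarrow> ('a \<Rightarrow> 'a \<Rightarrow> real) \<Rightarrow> bool" where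
  "discrete_metric_on V d \<longleftrightarrow>
     (\<forall>x\<in>V. \<forall>y\<in>V. 0 \<le> d x y) \<and>
     (\<forall>x\<in>V. \<forall>y\<in>V. d x y = 0 \<longleftrightarrow> x = y) \<and>
     (\<forall>x\<in>V. \<forall>y\<in>V. d x y = d y x) \<and>
     (\<forall>x\<in>V. \<forall>y\<in>V. \<forall>z\<in>V. d x z \<le> d x y + d y z) \<and>
     (\<forall>x\<in>V. \<exists>r>0. \<forall>y\<in>V. d x y < r \<longrightarrow> y = x)"

text \<open>Y n is the jump chain, E n are i.i.d. Exp(1) variables independent of Y.
  The n-th holding time is E n / jump_rate (Y n); J n are the jump times.\<close>

definition path_prob :: "('a \<Rightarrow> 'a \<Rightarrow> real) \<Rightarrow> 'a \<Rightarrow> 'a list \<Rightarrow> real" where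
  "path_prob w x ys =
     (if hd ys = x then 1 else 0) * (\<Prod>i<length ys - 1. jump_prob w (ys ! i) (ys ! Suc i))"

definition minimal_chain ::
  "'a set \<Rightarrow> ('a \<Rightarrow> 'a \<Rightarrow> real) \<Rightarrow> ('a \<Rightarrow> real) \<Rightarrow> 'a \<Rightarrow> 'w measure
    \<Rightarrow> (nat \<Rightarrow> 'w \<Rightarrow> 'a) \<Rightarrow> (nat \<Rightarrow> 'w \<Rightarrow> real) \<Rightarrow> bool" where
  "minimal_chain V w \<mu> x M Y E \<longleftrightarrow>
     prob_space M \<and>
     (\<forall>n. Y n \<in> M \<rightarrow>\<^sub>M count_space UNIV) \<and>
     (\<forall>n. E n \<in> borel_measurable M) \<and>
     (\<forall>n ys ts. length ys = Suc n \<longrightarrow> length ts = n \<longrightarrow> (\<forall>t\<in>set ts. 0 \<le> t) \<longrightarrow>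
        measure M {\<omega> \<in> space M. (\<forall>i\<le>n. Y i \<omega> = ys ! i) \<and> (\<forall>i<n. ts ! i < E i \<omega>)}
          = path_prob w x ys * exp (- sum_list ts))"

definition jump_time ::
  "('a \<Rightarrow> 'a \<Rightarrow> real) \<Rightarrow> ('a \<Rightarrow> real) \<Rightarrow> (nat \<Rightarrow> 'w \<Rightarrow> 'a) \<Rightarrow> (nat \<Rightarrow> 'w \<Rightarrow> real)
     \<Rightarrow> nat \<Rightarrow> 'w \<Rightarrow> real" where
  "jump_time w \<mu> Y E n \<omega> = (\<Sum>i<n. E i \<omega> / jump_rate w \<mu> (Y i \<omega>))"

definition lifetime ::
  "('a \<Rightarrow> 'a \<Rightarrow> real) \<Rightarrow> ('a \<Rightarrow> real) \<Rightarrow> (nat \<Rightarrow> 'w \<Rightarrow> 'a) \<Rightarrow> (nat \<Rightarrow> 'w \<Rightarrow> real)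
     \<Rightarrow> 'w \<Rightarrow> ereal" where
  "lifetime w \<mu> Y E \<omega> = (SUP n. ereal (jump_time w \<mu> Y E n \<omega>))"

text \<open>The continuous-time process X_t = Y_n for J_n <= t < J_{n+1} (meaningful for t < zeta).\<close>

definition chain_state ::
  "('a \<Rightarrow> 'a \<Rightarrow> real) \<Rightarrow> ('a \<Rightarrow> real) \<Rightarrow> (nat \<Rightarrow> 'w \<Rightarrow> 'a) \<Rightarrow> (nat \<Rightarrow> 'w \<Rightarrow> real)
     \<Rightarrow> real \<Rightarrow> 'w \<Rightarrow> 'a" where
  "chain_state w \<mu> Y E t \<omega> = Y (LEAST n. t < jump_time w \<mu> Y E (Suc n) \<omega>) \<omega>"

definition upper_rate_function ::
  "('a \<Rightarrow> 'a \<Rightarrow> real) \<Rightarrow> ('a \<Rightarrow> real) \<Rightarrow> ('a \<Rightarrow> 'a \<Rightarrow> real) \<Rightarrow> 'a \<Rightarrow> 'w measure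
     \<Rightarrow> (nat \<Rightarrow> 'w \<Rightarrow> 'a) \<Rightarrow> (nat \<Rightarrow> 'w \<Rightarrow> real) \<Rightarrow> (real \<Rightarrow> real) \<Rightarrow> bool" where
  "upper_rate_function w \<mu> d xbar M Y E R \<longleftrightarrow>
     (\<forall>t\<ge>0. 0 \<le> R t) \<and> mono_on {0..} R \<and>
     (\<exists>T :: 'w \<Rightarrow> real. AE \<omega> in M.
        ereal (T \<omega>) < lifetime w \<mu> Y E \<omega> \<and>
        (\<forall>t. 0 \<le> t \<and> T \<omega> \<le> t \<and> ereal t < lifetime w \<mu> Y E \<omega> \<longrightarrow>
              d (chain_state w \<mu> Y E t \<omega>) xbar \<le> R t))"

definition conservative_chain ::
  "'a set \<Rightarrow> ('a \<Rightarrow> 'a \<Rightarrow> real) \<Rightarrow> ('a \<Rightarrow> real) \<Rightarrow> ('a \<Rightarrow> 'w measure)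
     \<Rightarrow> ('a \<Rightarrow> nat \<Rightarrow> 'w \<Rightarrow> 'a) \<Rightarrow> ('a \<Rightarrow> nat \<Rightarrow> 'w \<Rightarrow> real) \<Rightarrow> bool" where
  "conservative_chain V w \<mu> M Y E \<longleftrightarrow>
     (\<forall>x\<in>V. AE \<omega> in M x. lifetime w \<mu> (Y x) (E x) \<omega> = \<infinity>)"

end

theory Submission
  imports Defs
begin

text \<open>
  Suppose the chain from \<open>xbar\<close> explodes at a finite time \<open>\<zeta>\<close>. After the random time \<open>T\<close> it
  stays in the ball of radius \<open>R \<zeta>\<close>, which is finite, so it visits only finitely many states
  and its jump rates are bounded. The jump times then dominate a multiple of the partial sums of
  the i.i.d. \<open>Exp(1)\<close> holding times, which diverge because infinitely many of them exceed \<open>1\<close>;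
  so the chain from \<open>xbar\<close> is conservative almost surely.

  For another vertex \<open>x\<close> choose a path \<open>p\<close> from \<open>xbar\<close> to \<open>x\<close> of positive probability. By the
  Markov property at the end of \<open>p\<close>, the probability that the chain from \<open>x\<close> spends at most time
  \<open>L\<close> in its first \<open>n\<close> sojourns is that of the corresponding event after \<open>p\<close> for the chain from
  \<open>xbar\<close>, divided by the probability of \<open>p\<close>; letting \<open>n \<rightarrow> \<infinity>\<close> this tends to \<open>0\<close>. As the chain is
  only specified through its cylinder probabilities, the comparison is made on orthants of the
  holding times and extended to all Borel sets by the \<open>\<pi>\<close>-\<open>\<lambda>\<close> theorem.
\<close>

section \<open>Orthants determine finite-dimensional laws\<close>

definition upper_orthant :: "'i set \<Rightarrow> ('i \<Rightarrow> real) \<Rightarrow> ('i \<Rightarrow> real) set" where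
  "upper_orthant I a = {f \<in> (\<Pi>\<^sub>E i\<in>I. UNIV). \<forall>i\<in>I. a i < f i}"

lemma upper_orthant_Int: "upper_orthant I a \<inter> upper_orthant I b = upper_orthant I (\<lambda>i. max (a i) (b i))"
  by (auto simp: upper_orthant_def)

lemma sets_PiM_borel_upper_orthants:
  fixes I :: "'i set"
  assumes "finite I"
  shows "sets (\<Pi>\<^sub>M i\<in>I. (borel :: real measure)) = sigma_sets (\<Pi>\<^sub>E i\<in>I. UNIV) (range (upper_orthant I))"
proof -
  have cover: "\<exists>S\<subseteq>range greaterThan. countable S \<and> (UNIV :: real set) = \<Union>S"
  proof (intro exI conjI)
    show "(UNIV :: real set) = (\<Union>j::nat. {- real j<..})"
    proof (intro set_eqI iffI)
      fix x :: real
      obtain j :: nat where "- x < real j" using reals_Archimedean2 by blast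
      then show "x \<in> (\<Union>j::nat. {- real j<..})" by (auto intro!: exI[of _ j])
    qed auto
  qed auto
  have gen: "{{f\<in>(\<Pi>\<^sub>E i\<in>I. UNIV). \<forall>i\<in>j. f i \<in> A i} | A j. j \<in> {I} \<and> A \<in> Pi j (\<lambda>_. range (greaterThan :: real \<Rightarrow> _))}
      = range (upper_orthant I)"
  proof (intro set_eqI iffI)
    fix X :: "('i \<Rightarrow> real) set" assume "X \<in> {{f\<in>(\<Pi>\<^sub>E i\<in>I. UNIV). \<forall>i\<in>j. f i \<in> A i} | A j. j \<in> {I} \<and> A \<in> Pi j (\<lambda>_. range (greaterThan :: real \<Rightarrow> _))}"
    then obtain A :: "'i \<Rightarrow> real set" where X: "X = {f\<in>(\<Pi>\<^sub>E i\<in>I. UNIV). \<forall>i\<in>I. f i \<in> A i}"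
      and A: "\<forall>i\<in>I. \<exists>a. A i = {a<..}"
      by (auto simp: Pi_iff image_iff)
    then obtain a :: "_ \<Rightarrow> real" where "\<forall>i\<in>I. A i = {a i<..}" by metis
    then have "X = upper_orthant I a" by (auto simp: X upper_orthant_def)
    then show "X \<in> range (upper_orthant I)" by blast
  next
    fix X :: "('i \<Rightarrow> real) set" assume "X \<in> range (upper_orthant I)"
    then obtain a where "X = {f\<in>(\<Pi>\<^sub>E i\<in>I. UNIV). \<forall>i\<in>I. f i \<in> {a i<..}}"
      by (auto simp: upper_orthant_def)
    then show "X \<in> {{f\<in>(\<Pi>\<^sub>E i\<in>I. UNIV). \<forall>i\<in>j. f i \<in> A i} | A j. j \<in> {I} \<and> A \<in> Pi j (\<lambda>_. range (greaterThan :: real \<Rightarrow> _))}"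
      by (intro CollectI exI[of _ "\<lambda>i. {a i<..}"] exI[of _ I]) auto
  qed
  have "sets (\<Pi>\<^sub>M i\<in>I. (borel :: real measure)) = sets (\<Pi>\<^sub>M i\<in>I. sigma UNIV (range greaterThan))"
    by (simp add: borel_Ioi)
  also have "\<dots> = sets (sigma (\<Pi>\<^sub>E i\<in>I. UNIV) (range (upper_orthant I)))"
    unfolding gen[symmetric] using assms cover by (intro sets_PiM_sigma) auto
  also have "\<dots> = sigma_sets (\<Pi>\<^sub>E i\<in>I. UNIV) (range (upper_orthant I))"
    by (rule sets_measure_of) (auto simp: upper_orthant_def)
  finally show ?thesis .
qed

lemma measure_eqI_upper_orthants:
  fixes I :: "'i set" and N1 N2 :: "('i \<Rightarrow> real) measure"
  assumes I: "finite I"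
    and sets: "sets N1 = sets (\<Pi>\<^sub>M i\<in>I. borel)" "sets N2 = sets (\<Pi>\<^sub>M i\<in>I. borel)"
    and fin: "finite_measure N1"
    and eq: "\<And>a. emeasure N1 (upper_orthant I a) = emeasure N2 (upper_orthant I a)"
  shows "N1 = N2"
proof (rule measure_eqI_generator_eq[where E = "range (upper_orthant I)" and \<Omega> = "\<Pi>\<^sub>E i\<in>I. UNIV"
      and A = "\<lambda>j. upper_orthant I (\<lambda>_. - real j)"])
  show "Int_stable (range (upper_orthant I))"
    by (auto simp: Int_stable_def upper_orthant_Int)
  show "range (upper_orthant I) \<subseteq> Pow (\<Pi>\<^sub>E i\<in>I. UNIV)"
    by (auto simp: upper_orthant_def)
  show "sets N1 = sigma_sets (\<Pi>\<^sub>E i\<in>I. UNIV) (range (upper_orthant I))"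
    "sets N2 = sigma_sets (\<Pi>\<^sub>E i\<in>I. UNIV) (range (upper_orthant I))"
    using sets sets_PiM_borel_upper_orthants[OF I] by simp_all
  show "(\<Union>j. upper_orthant I (\<lambda>_. - real j)) = (\<Pi>\<^sub>E i\<in>I. UNIV)"
  proof (intro set_eqI iffI)
    fix f :: "'i \<Rightarrow> real" assume f: "f \<in> (\<Pi>\<^sub>E i\<in>I. UNIV)"
    obtain j :: nat where j: "(\<Sum>i\<in>I. \<bar>f i\<bar>) < real j"
      using reals_Archimedean2 by blast
    have "- real j < f i" if "i \<in> I" for i
      using member_le_sum[of i I "\<lambda>i. \<bar>f i\<bar>"] that I j by auto
    then show "f \<in> (\<Union>j. upper_orthant I (\<lambda>_. - real j))"
      using f by (auto simp: upper_orthant_def)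
  qed (auto simp: upper_orthant_def)
  show "emeasure N1 (upper_orthant I (\<lambda>_. - real j)) \<noteq> \<infinity>" for j
    using fin by (simp add: finite_measure.emeasure_finite)
qed (auto simp: eq)

lemma emeasure_distr_restrict_space:
  assumes "A \<in> sets M" "f \<in> M \<rightarrow>\<^sub>M N" "X \<in> sets N"
  shows "emeasure (distr (restrict_space M A) N f) X = emeasure M {\<omega>\<in>A. f \<omega> \<in> X}"
proof -
  have "emeasure (distr (restrict_space M A) N f) X = emeasure M (f -` X \<inter> A)"
    using assms by (subst emeasure_distr) (auto intro: measurable_restrict_space1 simp: emeasure_restrict_space)
  also have "f -` X \<inter> A = {\<omega>\<in>A. f \<omega> \<in> X}" by blast
  finally show ?thesis .
qed

lemma measure_vimage_eqI_upper_orthants: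
  fixes I :: "'i set" and M1 :: "'v measure" and M2 :: "'w measure"
    and F1 :: "'i \<Rightarrow> 'v \<Rightarrow> real" and F2 :: "'i \<Rightarrow> 'w \<Rightarrow> real"
  assumes I: "finite I" and M1: "finite_measure M1" and M2: "finite_measure M2"
    and A1: "A1 \<in> sets M1" and A2: "A2 \<in> sets M2"
    and [measurable]: "\<And>i. F1 i \<in> borel_measurable M1" "\<And>i. F2 i \<in> borel_measurable M2"
    and c: "0 \<le> c"
    and orthants: "\<And>a. measure M1 {\<omega>\<in>A1. \<forall>i\<in>I. a i < F1 i \<omega>}
                     = c * measure M2 {\<omega>\<in>A2. \<forall>i\<in>I. a i < F2 i \<omega>}"
    and B: "B \<in> sets (\<Pi>\<^sub>M i\<in>I. borel)"
  shows "measure M1 {\<omega>\<in>A1. (\<lambda>i\<in>I. F1 i \<omega>) \<in> B} = c * measure M2 {\<omega>\<in>A2. (\<lambda>i\<in>I. F2 i \<omega>) \<in> B}"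
proof -
  interpret M1: finite_measure M1 by (rule M1)
  interpret M2: finite_measure M2 by (rule M2)
  let ?P = "\<Pi>\<^sub>M i\<in>I. (borel :: real measure)"
  define f1 where "f1 \<omega> = (\<lambda>i\<in>I. F1 i \<omega>)" for \<omega>
  define f2 where "f2 \<omega> = (\<lambda>i\<in>I. F2 i \<omega>)" for \<omega>
  have f: "f1 \<in> M1 \<rightarrow>\<^sub>M ?P" "f2 \<in> M2 \<rightarrow>\<^sub>M ?P"
    unfolding f1_def f2_def by measurable
  define N1 where "N1 = distr (restrict_space M1 A1) ?P f1"
  define N2 where "N2 = scale_measure (ennreal c) (distr (restrict_space M2 A2) ?P f2)"
  have N1: "emeasure N1 X = emeasure M1 {\<omega>\<in>A1. f1 \<omega> \<in> X}"
    and N2: "emeasure N2 X = ennreal c * emeasure M2 {\<omega>\<in>A2. f2 \<omega> \<in> X}" if "X \<in> sets ?P" for X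
    unfolding N1_def N2_def by (simp_all add: emeasure_distr_restrict_space A1 A2 f that)
  have "N1 = N2"
  proof (rule measure_eqI_upper_orthants[OF I])
    show "sets N1 = sets ?P" "sets N2 = sets ?P" by (simp_all add: N1_def N2_def)
    show "finite_measure N1"
      unfolding N1_def using f(1)
      by (intro finite_measure.finite_measure_distr finite_measure_restrict_space M1 A1 measurable_restrict_space1)
    fix a
    have "upper_orthant I a \<in> sets ?P"
      using sets_PiM_borel_upper_orthants[OF I] by auto
    moreover have "{\<omega>\<in>A1. f1 \<omega> \<in> upper_orthant I a} = {\<omega>\<in>A1. \<forall>i\<in>I. a i < F1 i \<omega>}"
      "{\<omega>\<in>A2. f2 \<omega> \<in> upper_orthant I a} = {\<omega>\<in>A2. \<forall>i\<in>I. a i < F2 i \<omega>}"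
      by (auto simp: f1_def f2_def upper_orthant_def)
    ultimately show "emeasure N1 (upper_orthant I a) = emeasure N2 (upper_orthant I a)"
      using orthants[of a] c
      by (simp add: N1 N2 M1.emeasure_eq_measure M2.emeasure_eq_measure ennreal_mult)
  qed
  then have "emeasure M1 {\<omega>\<in>A1. f1 \<omega> \<in> B} = ennreal c * emeasure M2 {\<omega>\<in>A2. f2 \<omega> \<in> B}"
    using N1[OF B] N2[OF B] by simp
  then show ?thesis
    using c by (simp add: f1_def f2_def M1.emeasure_eq_measure M2.emeasure_eq_measure ennreal_mult'[symmetric])
qed

definition walks :: "('a \<Rightarrow> 'a \<Rightarrow> real) \<Rightarrow> 'a \<Rightarrow> nat \<Rightarrow> 'a list set" where
  "walks w s n = {ys. length ys = Suc n \<and> hd ys = s \<and> (\<forall>i<n. 0 < w (ys ! i) (ys ! Suc i))}"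

lemma walks_eqI: "ys \<in> walks w s n \<Longrightarrow> zs \<in> walks w s n \<Longrightarrow> \<forall>i\<le>n. ys ! i = zs ! i \<Longrightarrow> ys = zs"
  unfolding walks_def by (auto intro: nth_equalityI)

lemma walks_iff:
  "(y 0 = s \<and> (\<forall>i<n. 0 < w (y i) (y (Suc i)))) \<longleftrightarrow> (\<exists>ys\<in>walks w s n. \<forall>i\<le>n. y i = ys ! i)"
proof
  assume "y 0 = s \<and> (\<forall>i<n. 0 < w (y i) (y (Suc i)))"
  then have "map y [0..<Suc n] \<in> walks w s n"
    unfolding walks_def by (auto simp: hd_map simp del: upt_Suc)
  moreover have "\<forall>i\<le>n. y i = map y [0..<Suc n] ! i" by (auto simp del: upt_Suc)
  ultimately show "\<exists>ys\<in>walks w s n. \<forall>i\<le>n. y i = ys ! i" by blast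
next
  assume "\<exists>ys\<in>walks w s n. \<forall>i\<le>n. y i = ys ! i"
  then obtain ys where ys: "ys \<in> walks w s n" "\<forall>i\<le>n. y i = ys ! i" by blast
  then have "ys \<noteq> []" unfolding walks_def by auto
  with ys show "y 0 = s \<and> (\<forall>i<n. 0 < w (y i) (y (Suc i)))"
    unfolding walks_def by (auto simp: hd_conv_nth)
qed

lemma walks_0: "walks w s 0 = {[s]}"
  unfolding walks_def by (auto simp: length_Suc_conv)

lemma walks_Suc:
  "walks w s (Suc n) = (\<lambda>(ys, z). ys @ [z]) ` (SIGMA ys:walks w s n. {z. 0 < w (last ys) z})"
proof (intro set_eqI iffI)
  fix zs assume zs: "zs \<in> walks w s (Suc n)"
  then obtain ys z where zs_eq: "zs = ys @ [z]" and len: "length ys = Suc n"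
    unfolding walks_def by (cases zs rule: rev_cases) auto
  have last: "last ys = ys ! n"
    using len by (cases ys rule: rev_cases) auto
  have steps: "0 < w (zs ! i) (zs ! Suc i)" if "i < Suc n" for i
    using zs that unfolding walks_def by blast
  have "0 < w (ys ! i) (ys ! Suc i)" if "i < n" for i
    using steps[of i] that len unfolding zs_eq by (simp add: nth_append)
  moreover have "hd ys = s"
    using zs len unfolding zs_eq walks_def by (cases ys) auto
  moreover have "0 < w (last ys) z"
    using steps[of n] len unfolding zs_eq last by (simp add: nth_append)
  ultimately have "ys \<in> walks w s n" "0 < w (last ys) z"
    using len unfolding walks_def by auto
  then show "zs \<in> (\<lambda>(ys, z). ys @ [z]) ` (SIGMA ys:walks w s n. {z. 0 < w (last ys) z})"
    using zs_eq by force
next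
  fix zs assume "zs \<in> (\<lambda>(ys, z). ys @ [z]) ` (SIGMA ys:walks w s n. {z. 0 < w (last ys) z})"
  then obtain ys z where ys: "ys \<in> walks w s n" and z: "0 < w (last ys) z" and zs: "zs = ys @ [z]"
    by auto
  have len: "length ys = Suc n" using ys by (simp add: walks_def)
  have last: "last ys = ys ! n"
    using len by (cases ys rule: rev_cases) auto
  show "zs \<in> walks w s (Suc n)"
    using ys z len unfolding zs walks_def last by (auto simp: nth_append less_Suc_eq hd_append)
qed

locale weighted_graph =
  fixes V :: "'a set" and w :: "'a \<Rightarrow> 'a \<Rightarrow> real" and \<mu> :: "'a \<Rightarrow> real"
  assumes graph: "simple_weighted_graph V w \<mu>"
begin

lemma weight_nonneg: "0 \<le> w x y"
  using graph unfolding simple_weighted_graph_def by blast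

lemma in_V_if_weight_pos: "0 < w x y \<Longrightarrow> x \<in> V \<and> y \<in> V"
  using graph unfolding simple_weighted_graph_def by blast

lemma in_V_if_walk:
  assumes "y 0 \<in> V" "\<forall>i. 0 < w (y i) (y (Suc i))"
  shows "y i \<in> V"
proof (cases i)
  case (Suc j)
  then show ?thesis using assms(2) in_V_if_weight_pos by blast
qed (use assms(1) in simp)

lemma finite_neighbours: "finite {y. 0 < w x y}"
proof (cases "x \<in> V")
  case True
  then show ?thesis using graph unfolding simple_weighted_graph_def by blast
next
  case False
  then have "{y. 0 < w x y} = {}" using in_V_if_weight_pos by blast
  then show ?thesis by simp
qed

lemma reachable: "x \<in> V \<Longrightarrow> y \<in> V \<Longrightarrow> (x, y) \<in> {(a, b). 0 < w a b}\<^sup>*"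
  using graph unfolding simple_weighted_graph_def by blast

text \<open>Connectedness of an infinite graph leaves no isolated vertex.\<close>

lemma exists_neighbour:
  assumes "x \<in> V"
  shows "\<exists>y. 0 < w x y"
proof -
  have "infinite V" using graph unfolding simple_weighted_graph_def by blast
  then obtain u where u: "u \<in> V" "u \<noteq> x"
    using assms by (metis finite.emptyI finite_insert finite_subset insertI1 subsetI)
  from reachable[OF assms u(1)] u(2) show ?thesis
    by (cases rule: converse_rtranclE) auto
qed

lemma wdeg_pos:
  assumes "x \<in> V"
  shows "0 < wdeg w x"
proof -
  obtain y where y: "0 < w x y" using exists_neighbour assms by blast
  have "w x y \<le> wdeg w x"
    unfolding wdeg_def using y finite_neighbours by (intro member_le_sum) auto
  with y show ?thesis by simp
qed

lemma jump_rate_pos: "x \<in> V \<Longrightarrow> 0 < jump_rate w \<mu> x"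
  using graph wdeg_pos unfolding simple_weighted_graph_def jump_rate_def by simp

lemma sum_jump_prob: "x \<in> V \<Longrightarrow> (\<Sum>y\<in>{y. 0 < w x y}. jump_prob w x y) = 1"
  using wdeg_pos[of x] unfolding jump_prob_def wdeg_def by (simp add: sum_divide_distrib[symmetric])

lemma path_prob_nonneg: "0 \<le> path_prob w x ys"
  unfolding path_prob_def jump_prob_def wdeg_def
  by (intro mult_nonneg_nonneg prod_nonneg divide_nonneg_nonneg sum_nonneg weight_nonneg) auto

lemma path_prob_snoc:
  assumes "ys \<noteq> []"
  shows "path_prob w x (ys @ [z]) = path_prob w x ys * jump_prob w (last ys) z"
proof -
  obtain m where m: "length ys = Suc m" using assms by (cases ys) auto
  have "(\<Prod>i<Suc m. jump_prob w ((ys @ [z]) ! i) ((ys @ [z]) ! Suc i))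
      = (\<Prod>i<m. jump_prob w (ys ! i) (ys ! Suc i)) * jump_prob w (last ys) z"
    using m assms by (simp add: nth_append last_conv_nth)
  then show ?thesis unfolding path_prob_def using assms m by simp
qed

lemma path_prob_append:
  assumes "p \<noteq> []"
  shows "path_prob w x (p @ ys) = path_prob w x p * path_prob w (last p) (last p # ys)"
proof (induction ys rule: rev_induct)
  case Nil
  then show ?case by (simp add: path_prob_def)
next
  case (snoc z ys)
  have "path_prob w x (p @ ys @ [z]) = path_prob w x (p @ ys) * jump_prob w (last (p @ ys)) z"
    using assms path_prob_snoc[of "p @ ys"] by simp
  also have "\<dots> = path_prob w x p * path_prob w (last p) ((last p # ys) @ [z])"
    using snoc assms path_prob_snoc[of "last p # ys"] by (cases "ys = []") auto
  finally show ?case by simp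
qed

lemma finite_walks: "finite (walks w s n)"
  by (induction n) (simp_all add: walks_0 walks_Suc finite_neighbours)

lemma walk_nth_in_V:
  assumes "ys \<in> walks w s n" "s \<in> V" "i \<le> n"
  shows "ys ! i \<in> V"
  using assms(3)
proof (induction i)
  case 0
  have "ys \<noteq> []" "hd ys = s" using assms(1) by (auto simp: walks_def)
  then show ?case using assms(2) by (simp add: hd_conv_nth[symmetric])
next
  case (Suc i)
  then have "0 < w (ys ! i) (ys ! Suc i)" using assms(1) unfolding walks_def by auto
  then show ?case using in_V_if_weight_pos by blast
qed

lemma sum_path_prob_walks:
  assumes "s \<in> V"
  shows "(\<Sum>ys\<in>walks w s n. path_prob w s ys) = 1"
proof (induction n)
  case 0
  then show ?case by (simp add: walks_0 path_prob_def)
next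
  case (Suc n)
  have last_V: "last ys \<in> V" if "ys \<in> walks w s n" for ys
  proof -
    have "length ys = Suc n" using that by (simp add: walks_def)
    then have "last ys = ys ! n" by (cases ys rule: rev_cases) auto
    then show ?thesis using walk_nth_in_V[OF that assms, of n] by simp
  qed
  have "inj_on (\<lambda>(ys, z). ys @ [z]) (SIGMA ys:walks w s n. {z. 0 < w (last ys) z})"
    by (auto simp: inj_on_def)
  then have "(\<Sum>ys\<in>walks w s (Suc n). path_prob w s ys)
      = (\<Sum>ys\<in>walks w s n. \<Sum>z\<in>{z. 0 < w (last ys) z}. path_prob w s (ys @ [z]))"
    unfolding walks_Suc
    by (simp add: sum.reindex case_prod_unfold sum.Sigma finite_walks finite_neighbours)
  also have "\<dots> = (\<Sum>ys\<in>walks w s n. path_prob w s ys * (\<Sum>z\<in>{z. 0 < w (last ys) z}. jump_prob w (last ys) z))"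
    by (intro sum.cong refl) (simp add: path_prob_snoc walks_def sum_distrib_left flip: length_greater_0_conv)
  also have "\<dots> = 1"
    using Suc by (simp add: sum_jump_prob last_V)
  finally show ?case .
qed

lemma exists_path_prob_pos:
  assumes "a \<in> V" "b \<in> V"
  shows "\<exists>p. p \<noteq> [] \<and> hd p = a \<and> last p = b \<and> 0 < path_prob w a p"
  using reachable[OF assms]
proof (induction rule: rtrancl_induct)
  case base
  show ?case by (rule exI[of _ "[a]"]) (simp add: path_prob_def)
next
  case (step y z)
  then obtain p where p: "p \<noteq> []" "hd p = a" "last p = y" "0 < path_prob w a p" by blast
  have "0 < w y z" using step.hyps(2) by simp
  then have "0 < jump_prob w y z"
    using wdeg_pos in_V_if_weight_pos unfolding jump_prob_def by simp
  then have "0 < path_prob w a (p @ [z])"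
    using path_prob_snoc[OF p(1)] p(3,4) by simp
  then show ?case using p by (intro exI[of _ "p @ [z]"]) auto
qed

end

locale chain_from = weighted_graph +
  fixes s :: 'a and M :: "'w measure" and Y :: "nat \<Rightarrow> 'w \<Rightarrow> 'a" and E :: "nat \<Rightarrow> 'w \<Rightarrow> real"
  assumes start_in_V: "s \<in> V"
    and chain: "minimal_chain V w \<mu> s M Y E"
begin

sublocale prob_space M
  using chain unfolding minimal_chain_def by blast

lemma measurable_Y[measurable]: "Y n \<in> M \<rightarrow>\<^sub>M count_space UNIV"
  using chain unfolding minimal_chain_def by blast

lemma measurable_E[measurable]: "E n \<in> borel_measurable M"
  using chain unfolding minimal_chain_def by blast

lemma prob_cylinder:
  assumes "length ys = Suc n" and "\<And>i. 0 \<le> t i"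
  shows "prob {\<omega>\<in>space M. (\<forall>i\<le>n. Y i \<omega> = ys ! i) \<and> (\<forall>i<n. t i < E i \<omega>)}
       = path_prob w s ys * exp (- (\<Sum>i<n. t i))"
proof -
  define ts where "ts = map t [0..<n]"
  have "length ts = n" "\<forall>t\<in>set ts. 0 \<le> t" "sum_list ts = (\<Sum>i<n. t i)"
    using assms(2) by (auto simp: ts_def sum_list_sum_nth atLeast0LessThan)
  then have "prob {\<omega>\<in>space M. (\<forall>i\<le>n. Y i \<omega> = ys ! i) \<and> (\<forall>i<n. ts ! i < E i \<omega>)}
       = path_prob w s ys * exp (- (\<Sum>i<n. t i))"
    using chain assms(1) unfolding minimal_chain_def by auto
  moreover have "\<forall>i<n. ts ! i = t i" by (simp add: ts_def)
  ultimately show ?thesis by simp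
qed

lemma prob_walk_holding_times:
  assumes "\<And>i. 0 \<le> t i"
  shows "{\<omega>\<in>space M. (Y 0 \<omega> = s \<and> (\<forall>i<n. 0 < w (Y i \<omega>) (Y (Suc i) \<omega>))) \<and> (\<forall>i<n. t i < E i \<omega>)} \<in> sets M"
    and "prob {\<omega>\<in>space M. (Y 0 \<omega> = s \<and> (\<forall>i<n. 0 < w (Y i \<omega>) (Y (Suc i) \<omega>))) \<and> (\<forall>i<n. t i < E i \<omega>)}
       = exp (- (\<Sum>i<n. t i))"
proof -
  define C where "C ys = {\<omega>\<in>space M. (\<forall>i\<le>n. Y i \<omega> = ys ! i) \<and> (\<forall>i<n. t i < E i \<omega>)}" for ys
  have eq: "{\<omega>\<in>space M. (Y 0 \<omega> = s \<and> (\<forall>i<n. 0 < w (Y i \<omega>) (Y (Suc i) \<omega>))) \<and> (\<forall>i<n. t i < E i \<omega>)}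
      = (\<Union>ys\<in>walks w s n. C ys)"
    unfolding C_def walks_iff[where y = "\<lambda>i. Y i _"] by blast
  have C_sets: "C ys \<in> sets M" for ys
    unfolding C_def by measurable
  then show "{\<omega>\<in>space M. (Y 0 \<omega> = s \<and> (\<forall>i<n. 0 < w (Y i \<omega>) (Y (Suc i) \<omega>))) \<and> (\<forall>i<n. t i < E i \<omega>)} \<in> sets M"
    unfolding eq by (intro sets.finite_UN finite_walks)
  have "disjoint_family_on C (walks w s n)"
    unfolding disjoint_family_on_def C_def by (auto dest: walks_eqI)
  then have "prob (\<Union>ys\<in>walks w s n. C ys) = (\<Sum>ys\<in>walks w s n. prob (C ys))"
    using C_sets by (intro finite_measure_finite_Union finite_walks) auto
  also have "\<dots> = (\<Sum>ys\<in>walks w s n. path_prob w s ys * exp (- (\<Sum>i<n. t i)))"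
    unfolding C_def using assms by (intro sum.cong refl prob_cylinder) (simp add: walks_def)
  also have "\<dots> = exp (- (\<Sum>i<n. t i))"
    by (simp add: sum_distrib_right[symmetric] sum_path_prob_walks start_in_V)
  finally show "prob {\<omega>\<in>space M. (Y 0 \<omega> = s \<and> (\<forall>i<n. 0 < w (Y i \<omega>) (Y (Suc i) \<omega>))) \<and> (\<forall>i<n. t i < E i \<omega>)}
       = exp (- (\<Sum>i<n. t i))"
    unfolding eq .
qed

lemma AE_walk_prefix:
  "AE \<omega> in M. (Y 0 \<omega> = s \<and> (\<forall>i<n. 0 < w (Y i \<omega>) (Y (Suc i) \<omega>))) \<and> (\<forall>i<n. 0 < E i \<omega>)"
proof -
  have "prob {\<omega>\<in>space M. (Y 0 \<omega> = s \<and> (\<forall>i<n. 0 < w (Y i \<omega>) (Y (Suc i) \<omega>))) \<and> (\<forall>i<n. (0::real) < E i \<omega>)} = 1"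
    using prob_walk_holding_times(2)[of "\<lambda>_. 0" n] by simp
  then have "AE \<omega> in M. \<omega> \<in> {\<omega>\<in>space M. (Y 0 \<omega> = s \<and> (\<forall>i<n. 0 < w (Y i \<omega>) (Y (Suc i) \<omega>))) \<and> (\<forall>i<n. (0::real) < E i \<omega>)}"
    by (rule AE_prob_1)
  then show ?thesis
    by (rule AE_mp) (intro AE_I2 impI, simp)
qed

lemma AE_walk:
  "AE \<omega> in M. Y 0 \<omega> = s \<and> (\<forall>i. 0 < w (Y i \<omega>) (Y (Suc i) \<omega>)) \<and> (\<forall>i. 0 < E i \<omega>)"
proof -
  have "AE \<omega> in M. \<forall>n. (Y 0 \<omega> = s \<and> (\<forall>i<Suc n. 0 < w (Y i \<omega>) (Y (Suc i) \<omega>))) \<and> (\<forall>i<Suc n. 0 < E i \<omega>)"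
    using AE_walk_prefix by (subst AE_all_countable) blast
  then show ?thesis
    by (rule AE_mp) (intro AE_I2 impI, blast)
qed

lemma prob_holding_times_greater:
  assumes "\<And>i. 0 \<le> t i"
  shows "prob {\<omega>\<in>space M. \<forall>i<n. t i < E i \<omega>} = exp (- (\<Sum>i<n. t i))"
proof -
  have "prob {\<omega>\<in>space M. \<forall>i<n. t i < E i \<omega>}
      = prob {\<omega>\<in>space M. (Y 0 \<omega> = s \<and> (\<forall>i<n. 0 < w (Y i \<omega>) (Y (Suc i) \<omega>))) \<and> (\<forall>i<n. t i < E i \<omega>)}"
  proof (rule measure_eq_AE)
    show "AE \<omega> in M. (\<omega> \<in> {\<omega>\<in>space M. \<forall>i<n. t i < E i \<omega>}) =
        (\<omega> \<in> {\<omega>\<in>space M. (Y 0 \<omega> = s \<and> (\<forall>i<n. 0 < w (Y i \<omega>) (Y (Suc i) \<omega>))) \<and> (\<forall>i<n. t i < E i \<omega>)})"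
      using AE_walk_prefix[of n] by (rule AE_mp) (intro AE_I2 impI, simp)
    show "{\<omega>\<in>space M. \<forall>i<n. t i < E i \<omega>} \<in> sets M"
      by measurable
  qed (rule prob_walk_holding_times(1)[OF assms])
  then show ?thesis using prob_walk_holding_times(2)[OF assms] by simp
qed

text \<open>Inclusion--exclusion: adding \<open>k\<close> to \<open>S\<close> removes from the event for \<open>S\<close> the event where
  the threshold at \<open>k\<close> is raised from \<open>0\<close> to \<open>1\<close>.\<close>

lemma prob_holding_times_le_1:
  assumes "finite S" "S \<subseteq> {..<n}" "\<And>i. 0 \<le> t i" "\<And>i. i \<in> S \<Longrightarrow> t i = 0"
  shows "prob {\<omega>\<in>space M. \<forall>i<n. t i < E i \<omega> \<and> (i \<in> S \<longrightarrow> E i \<omega> \<le> 1)}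
       = exp (- (\<Sum>i\<in>{..<n}-S. t i)) * (1 - exp (-1)) ^ card S"
  using assms
proof (induction S arbitrary: t rule: finite_induct)
  case empty
  then show ?case using prob_holding_times_greater[of t n] by simp
next
  case (insert k S)
  let ?D = "\<lambda>S t. {\<omega>\<in>space M. \<forall>i<n. t i < E i \<omega> \<and> (i \<in> S \<longrightarrow> E i \<omega> \<le> 1)}"
  define t' where "t' = t(k := 1)"
  have k: "k < n" "t k = 0" using insert.prems by auto
  have split: "{..<n} - S = insert k ({..<n} - insert k S)" using k insert.hyps by auto
  have sum_t: "(\<Sum>i\<in>{..<n}-S. t i) = (\<Sum>i\<in>{..<n}-insert k S. t i)"
    unfolding split using k by (subst sum.insert) auto
  have sum_t': "(\<Sum>i\<in>{..<n}-S. t' i) = 1 + (\<Sum>i\<in>{..<n}-insert k S. t i)"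
    unfolding split by (subst sum.insert) (auto simp: t'_def intro!: sum.cong)
  have "?D (insert k S) t = ?D S t - ?D S t'"
    using k by (auto simp: t'_def not_less)
  moreover have "?D S t' \<subseteq> ?D S t"
    using k insert.prems by (auto simp: t'_def split: if_splits intro: le_less_trans)
  ultimately have "prob (?D (insert k S) t) = prob (?D S t) - prob (?D S t')"
    by (simp add: finite_measure_Diff)
  also have "prob (?D S t') = exp (- (\<Sum>i\<in>{..<n}-S. t' i)) * (1 - exp (-1)) ^ card S"
    by (rule insert.IH) (use insert.prems insert.hyps in \<open>auto simp: t'_def\<close>)
  also have "prob (?D S t) = exp (- (\<Sum>i\<in>{..<n}-S. t i)) * (1 - exp (-1)) ^ card S"
    by (rule insert.IH) (use insert.prems in auto)
  also have "exp (- (\<Sum>i\<in>{..<n}-S. t i)) * (1 - exp (-1)) ^ card S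
      - exp (- (\<Sum>i\<in>{..<n}-S. t' i)) * (1 - exp (-1)) ^ card S
      = exp (- (\<Sum>i\<in>{..<n}-insert k S. t i)) * (1 - exp (-1)) ^ card S
        - exp (- 1 - (\<Sum>i\<in>{..<n}-insert k S. t i)) * (1 - exp (-1)) ^ card S"
    unfolding sum_t sum_t' by (simp add: algebra_simps)
  also have "\<dots> = exp (- (\<Sum>i\<in>{..<n}-insert k S. t i)) * (1 - exp (-1)) ^ card (insert k S)"
    using insert.hyps by (simp add: exp_diff exp_minus field_simps)
  finally show ?case .
qed

lemma prob_holding_times_block_le_1:
  "prob {\<omega>\<in>space M. \<forall>i\<in>{N..<N+m}. E i \<omega> \<le> 1} = (1 - exp (-1)) ^ m"
proof -
  have "prob {\<omega>\<in>space M. \<forall>i\<in>{N..<N+m}. E i \<omega> \<le> 1}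
      = prob {\<omega>\<in>space M. \<forall>i<N+m. 0 < E i \<omega> \<and> (i \<in> {N..<N+m} \<longrightarrow> E i \<omega> \<le> 1)}"
  proof (rule measure_eq_AE)
    show "AE \<omega> in M. (\<omega> \<in> {\<omega>\<in>space M. \<forall>i\<in>{N..<N+m}. E i \<omega> \<le> 1})
        = (\<omega> \<in> {\<omega>\<in>space M. \<forall>i<N+m. 0 < E i \<omega> \<and> (i \<in> {N..<N+m} \<longrightarrow> E i \<omega> \<le> 1)})"
      using AE_walk by (rule AE_mp) (intro AE_I2 impI, auto)
  qed measurable
  also have "\<dots> = (1 - exp (-1)) ^ m"
    using prob_holding_times_le_1[of "{N..<N+m}" "N+m" "\<lambda>_. 0"] by (simp add: subset_eq)
  finally show ?thesis .
qed

lemma AE_holding_times_frequently_gt_1: "AE \<omega> in M. \<forall>N. \<exists>i\<ge>N. 1 < E i \<omega>"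
proof (subst AE_all_countable, intro allI)
  fix N
  let ?B = "{\<omega>\<in>space M. \<forall>i\<ge>N. E i \<omega> \<le> 1}"
  have "prob ?B \<le> prob {\<omega>\<in>space M. \<forall>i\<in>{N..<N+m}. E i \<omega> \<le> 1}" for m
    by (rule finite_measure_mono) auto
  then have "prob ?B \<le> (1 - exp (-1)) ^ m" for m
    by (simp add: prob_holding_times_block_le_1)
  moreover have "(\<lambda>m. (1 - exp (-1 :: real)) ^ m) \<longlonglongrightarrow> 0"
    by (intro LIMSEQ_realpow_zero) auto
  ultimately have "prob ?B \<le> 0"
    by (intro LIMSEQ_le_const[of _ 0]) (auto intro: exI[of _ 0])
  then have "?B \<in> null_sets M"
    by (intro null_setsI) (auto simp: emeasure_eq_measure measure_le_0_iff)
  then show "AE \<omega> in M. \<exists>i\<ge>N. 1 < E i \<omega>"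
    by (rule AE_not_in[THEN AE_mp]) (intro AE_I2 impI, auto simp: not_le)
qed

end

section \<open>Non-explosion under an upper rate function\<close>

lemma jump_time_Suc:
  "jump_time w \<mu> Y E (Suc n) \<omega> = jump_time w \<mu> Y E n \<omega> + E n \<omega> / jump_rate w \<mu> (Y n \<omega>)"
  by (simp add: jump_time_def)

lemma jump_time_le_lifetime: "ereal (jump_time w \<mu> Y E n \<omega>) \<le> lifetime w \<mu> Y E \<omega>"
  unfolding lifetime_def by (rule SUP_upper) simp

lemma strict_mono_jump_time:
  assumes "\<And>i. 0 < E i \<omega>" "\<And>i. 0 < jump_rate w \<mu> (Y i \<omega>)"
  shows "strict_mono (\<lambda>n. jump_time w \<mu> Y E n \<omega>)"
  by (rule strict_monoI_Suc) (simp add: jump_time_Suc assms)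

lemma jump_time_less_lifetime:
  assumes "strict_mono (\<lambda>n. jump_time w \<mu> Y E n \<omega>)"
  shows "ereal (jump_time w \<mu> Y E n \<omega>) < lifetime w \<mu> Y E \<omega>"
proof -
  have "ereal (jump_time w \<mu> Y E n \<omega>) < ereal (jump_time w \<mu> Y E (Suc n) \<omega>)"
    using strict_monoD[OF assms, of n "Suc n"] by simp
  then show ?thesis using jump_time_le_lifetime by (rule order_less_le_trans)
qed

lemma chain_state_jump_time:
  assumes "strict_mono (\<lambda>n. jump_time w \<mu> Y E n \<omega>)"
  shows "chain_state w \<mu> Y E (jump_time w \<mu> Y E n \<omega>) \<omega> = Y n \<omega>"
proof -
  have "(LEAST m. jump_time w \<mu> Y E n \<omega> < jump_time w \<mu> Y E (Suc m) \<omega>) = n"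
    using strict_mono_less[OF assms] by (intro Least_equality) (simp_all add: less_Suc_eq_le)
  then show ?thesis by (simp add: chain_state_def)
qed

text \<open>With bounded jump rates the jump times dominate a multiple of \<open>\<Sum>i<n. E i\<close>, which is
  unbounded when \<open>E\<close> does not tend to zero.\<close>

lemma lifetime_infinite_if_rates_bounded:
  assumes E_nonneg: "\<And>i. 0 \<le> E i \<omega>" and often: "\<forall>N. \<exists>i\<ge>N. 1 < E i \<omega>"
    and rate_pos: "\<And>i. 0 < jump_rate w \<mu> (Y i \<omega>)" and rate_le: "\<And>i. jump_rate w \<mu> (Y i \<omega>) \<le> K"
  shows "lifetime w \<mu> Y E \<omega> = \<infinity>"
proof (rule ccontr)
  assume "lifetime w \<mu> Y E \<omega> \<noteq> \<infinity>"
  moreover have "ereal 0 \<le> lifetime w \<mu> Y E \<omega>"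
    using jump_time_le_lifetime[of w \<mu> Y E 0 \<omega>] by (simp add: jump_time_def)
  ultimately obtain L where "lifetime w \<mu> Y E \<omega> = ereal L"
    by (cases "lifetime w \<mu> Y E \<omega>") auto
  then have J_le: "jump_time w \<mu> Y E n \<omega> \<le> L" for n
    using jump_time_le_lifetime[of w \<mu> Y E n \<omega>] by simp
  have "(\<Sum>i<n. E i \<omega>) \<le> K * L" for n
  proof -
    have "(\<Sum>i<n. E i \<omega>) = (\<Sum>i<n. jump_rate w \<mu> (Y i \<omega>) * (E i \<omega> / jump_rate w \<mu> (Y i \<omega>)))"
      using rate_pos by (intro sum.cong) (auto simp: less_imp_neq[symmetric])
    also have "\<dots> \<le> (\<Sum>i<n. K * (E i \<omega> / jump_rate w \<mu> (Y i \<omega>)))"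
      using E_nonneg rate_pos rate_le by (intro sum_mono mult_right_mono) (auto intro: less_imp_le divide_nonneg_nonneg)
    also have "\<dots> = K * jump_time w \<mu> Y E n \<omega>"
      by (simp add: jump_time_def sum_distrib_left)
    also have "\<dots> \<le> K * L"
      using J_le rate_pos[of 0] rate_le[of 0] by (intro mult_left_mono) auto
    finally show ?thesis .
  qed
  then have "(\<lambda>i. E i \<omega>) \<longlonglongrightarrow> 0"
    by (intro summable_LIMSEQ_zero summableI_nonneg_bounded E_nonneg)
  then obtain N where "\<forall>i\<ge>N. \<bar>E i \<omega>\<bar> < 1"
    using LIMSEQ_D[of "\<lambda>i. E i \<omega>" 0 1] by auto
  with often show False by fastforce
qed

context weighted_graph
begin

text \<open>If the chain explodes at time \<open>L\<close>, then after time \<open>T\<close> it stays in the finite ball of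
  radius \<open>R L\<close>.\<close>

lemma finite_range_if_upper_rate:
  fixes d :: "'a \<Rightarrow> 'a \<Rightarrow> real" and R :: "real \<Rightarrow> real"
  assumes Y_V: "\<And>i. Y i \<omega> \<in> V" and J: "strict_mono (\<lambda>n. jump_time w \<mu> Y E n \<omega>)"
    and L: "lifetime w \<mu> Y E \<omega> = ereal L"
    and T: "ereal T < lifetime w \<mu> Y E \<omega>"
    and bound: "\<forall>t. 0 \<le> t \<and> T \<le> t \<and> ereal t < lifetime w \<mu> Y E \<omega> \<longrightarrow>
              d (chain_state w \<mu> Y E t \<omega>) s \<le> R t"
    and R: "mono_on {0..} R"
    and balls: "\<forall>r. finite {y \<in> V. d y s \<le> r}"
  shows "finite (range (\<lambda>i. Y i \<omega>))"
proof -
  let ?J = "\<lambda>n. jump_time w \<mu> Y E n \<omega>"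
  have J_nonneg: "0 \<le> ?J n" for n
    using strict_mono_less_eq[OF J, of 0 n] by (simp add: jump_time_def)
  obtain N where N: "T < ?J N"
    using T unfolding lifetime_def by (auto simp: less_SUP_iff)
  have ball: "d (Y n \<omega>) s \<le> R L" if "N \<le> n" for n
  proof -
    have "T \<le> ?J n" using N strict_mono_less_eq[OF J] that by (meson less_imp_le order_trans)
    then have "d (Y n \<omega>) s \<le> R (?J n)"
      using bound J_nonneg[of n] jump_time_less_lifetime[OF J, of n] chain_state_jump_time[OF J, of n]
      by auto
    also have "\<dots> \<le> R L"
      using jump_time_less_lifetime[OF J, of n] J_nonneg[of n] L by (intro mono_onD[OF R]) auto
    finally show ?thesis .
  qed
  have "Y i \<omega> \<in> (\<lambda>i. Y i \<omega>) ` {..<N} \<union> {y \<in> V. d y s \<le> R L}" for i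
    using ball[of i] Y_V[of i] by (cases "i < N") auto
  then have "range (\<lambda>i. Y i \<omega>) \<subseteq> (\<lambda>i. Y i \<omega>) ` {..<N} \<union> {y \<in> V. d y s \<le> R L}"
    by blast
  then show ?thesis
    by (rule finite_subset) (use balls in simp)
qed

lemma lifetime_infinite_if_upper_rate:
  fixes d :: "'a \<Rightarrow> 'a \<Rightarrow> real" and R :: "real \<Rightarrow> real"
  assumes s: "s \<in> V" and walk: "Y 0 \<omega> = s" "\<forall>i. 0 < w (Y i \<omega>) (Y (Suc i) \<omega>)"
    and E_pos: "\<forall>i. 0 < E i \<omega>" and often: "\<forall>N. \<exists>i\<ge>N. 1 < E i \<omega>"
    and T: "ereal T < lifetime w \<mu> Y E \<omega>"
    and bound: "\<forall>t. 0 \<le> t \<and> T \<le> t \<and> ereal t < lifetime w \<mu> Y E \<omega> \<longrightarrow>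
              d (chain_state w \<mu> Y E t \<omega>) s \<le> R t"
    and R: "mono_on {0..} R"
    and balls: "\<forall>r. finite {y \<in> V. d y s \<le> r}"
  shows "lifetime w \<mu> Y E \<omega> = \<infinity>"
proof (rule ccontr)
  assume finite_lifetime: "lifetime w \<mu> Y E \<omega> \<noteq> \<infinity>"
  have Y_V: "Y i \<omega> \<in> V" for i
    using in_V_if_walk[of "\<lambda>i. Y i \<omega>"] walk s by simp
  then have rate_pos: "0 < jump_rate w \<mu> (Y i \<omega>)" for i
    by (rule jump_rate_pos)
  have J: "strict_mono (\<lambda>n. jump_time w \<mu> Y E n \<omega>)"
    using E_pos rate_pos by (intro strict_mono_jump_time) auto
  obtain L where L: "lifetime w \<mu> Y E \<omega> = ereal L"
    using finite_lifetime jump_time_less_lifetime[OF J, of 0] by (cases "lifetime w \<mu> Y E \<omega>") auto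
  have "finite (range (\<lambda>i. Y i \<omega>))"
    using Y_V J L T bound R balls by (rule finite_range_if_upper_rate)
  then have "jump_rate w \<mu> (Y i \<omega>) \<le> Max (jump_rate w \<mu> ` range (\<lambda>i. Y i \<omega>))" for i
    by (intro Max_ge) auto
  then have "lifetime w \<mu> Y E \<omega> = \<infinity>"
    using E_pos often rate_pos by (intro lifetime_infinite_if_rates_bounded) (auto intro: less_imp_le)
  with finite_lifetime show False by simp
qed

end

lemma (in chain_from) AE_lifetime_infinite_if_upper_rate:
  assumes d: "discrete_metric_on V d" and balls: "\<forall>r. finite {y \<in> V. d s y \<le> r}"
    and upper_rate: "upper_rate_function w \<mu> d s M Y E R"
  shows "AE \<omega> in M. lifetime w \<mu> Y E \<omega> = \<infinity>"
proof -
  have R: "mono_on {0..} R"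
    using upper_rate unfolding upper_rate_function_def by blast
  obtain T where T: "AE \<omega> in M. ereal (T \<omega>) < lifetime w \<mu> Y E \<omega> \<and>
      (\<forall>t. 0 \<le> t \<and> T \<omega> \<le> t \<and> ereal t < lifetime w \<mu> Y E \<omega> \<longrightarrow> d (chain_state w \<mu> Y E t \<omega>) s \<le> R t)"
    using upper_rate unfolding upper_rate_function_def by blast
  have "\<forall>x\<in>V. \<forall>y\<in>V. d x y = d y x"
    using d unfolding discrete_metric_on_def by (elim conjE)
  then have "{y \<in> V. d y s \<le> r} = {y \<in> V. d s y \<le> r}" for r
    using start_in_V by auto
  then have balls': "\<forall>r. finite {y \<in> V. d y s \<le> r}"
    using balls by simp
  from T AE_walk AE_holding_times_frequently_gt_1 show ?thesis
  proof eventually_elim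
    case (elim \<omega>)
    then have "Y 0 \<omega> = s" "\<forall>i. 0 < w (Y i \<omega>) (Y (Suc i) \<omega>)" "\<forall>i. 0 < E i \<omega>"
      "\<forall>N. \<exists>i\<ge>N. 1 < E i \<omega>" "ereal (T \<omega>) < lifetime w \<mu> Y E \<omega>"
      "\<forall>t. 0 \<le> t \<and> T \<omega> \<le> t \<and> ereal t < lifetime w \<mu> Y E \<omega> \<longrightarrow> d (chain_state w \<mu> Y E t \<omega>) s \<le> R t"
      by blast+
    then show ?case
      using R balls' by (rule lifetime_infinite_if_upper_rate[OF start_in_V])
  qed
qed

section \<open>Transfer of conservativeness along a path\<close>

lemma jump_time_add:
  "jump_time w \<mu> Y E (k + n) \<omega> = jump_time w \<mu> Y E k \<omega> + (\<Sum>i<n. E (k + i) \<omega> / jump_rate w \<mu> (Y (k + i) \<omega>))"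
  by (induction n) (simp_all add: jump_time_Suc)

lemma lifetime_le_if_sojourns_bounded:
  assumes nonneg: "\<And>i. 0 \<le> E i \<omega> / jump_rate w \<mu> (Y i \<omega>)"
    and bounded: "\<And>n. (\<Sum>i<n. E (k + i) \<omega> / jump_rate w \<mu> (Y (k + i) \<omega>)) \<le> L"
  shows "lifetime w \<mu> Y E \<omega> \<le> ereal (jump_time w \<mu> Y E k \<omega> + L)"
  unfolding lifetime_def
proof (rule SUP_least)
  fix m
  have "jump_time w \<mu> Y E m \<omega> \<le> jump_time w \<mu> Y E (k + m) \<omega>"
    by (rule lift_Suc_mono_le[of "\<lambda>n. jump_time w \<mu> Y E n \<omega>"]) (simp_all add: jump_time_Suc nonneg)
  also have "\<dots> \<le> jump_time w \<mu> Y E k \<omega> + L"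
    using bounded[of m] by (simp add: jump_time_add)
  finally show "ereal (jump_time w \<mu> Y E m \<omega>) \<le> ereal (jump_time w \<mu> Y E k \<omega> + L)"
    by simp
qed

context chain_from
begin

definition walk_event :: "nat \<Rightarrow> 'a list \<Rightarrow> nat \<Rightarrow> 'w set" where
  "walk_event k ys n = {\<omega>\<in>space M. (\<forall>i\<le>n. Y (k + i) \<omega> = ys ! i) \<and> (\<forall>i<k + n. 0 < E i \<omega>)}"

definition walk_sojourn_event :: "nat \<Rightarrow> 'a list \<Rightarrow> nat \<Rightarrow> real \<Rightarrow> 'w set" where
  "walk_sojourn_event k ys n L =
     {\<omega>\<in>walk_event k ys n. (\<Sum>i<n. E (k + i) \<omega> / jump_rate w \<mu> (ys ! i)) \<le> L}"

definition sojourn_event :: "nat \<Rightarrow> 'a \<Rightarrow> nat \<Rightarrow> real \<Rightarrow> 'w set" where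
  "sojourn_event k y n L = {\<omega>\<in>space M. Y k \<omega> = y \<and> (\<forall>i<n. 0 < w (Y (k + i) \<omega>) (Y (k + Suc i) \<omega>)) \<and>
     (\<forall>i<k + n. 0 < E i \<omega>) \<and> (\<Sum>i<n. E (k + i) \<omega> / jump_rate w \<mu> (Y (k + i) \<omega>)) \<le> L}"

lemma walk_event_sets[measurable]: "walk_event k ys n \<in> sets M"
  unfolding walk_event_def by measurable

lemma walk_sojourn_event_sets[measurable]: "walk_sojourn_event k ys n L \<in> sets M"
proof -
  have "walk_sojourn_event k ys n L
      = {\<omega>\<in>space M. (\<Sum>i<n. E (k + i) \<omega> / jump_rate w \<mu> (ys ! i)) \<le> L} \<inter> walk_event k ys n"
    unfolding walk_sojourn_event_def using sets.sets_into_space[OF walk_event_sets] by blast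
  also have "\<dots> \<in> sets M" by measurable
  finally show ?thesis .
qed

lemma sojourn_event_eq_UN_walks:
  "sojourn_event k y n L = (\<Union>ys\<in>walks w y n. walk_sojourn_event k ys n L)"
proof (intro set_eqI iffI)
  fix \<omega> assume "\<omega> \<in> sojourn_event k y n L"
  then have \<omega>: "\<omega> \<in> space M" "Y (k + 0) \<omega> = y" "\<forall>i<n. 0 < w (Y (k + i) \<omega>) (Y (k + Suc i) \<omega>)"
    "\<forall>i<k + n. 0 < E i \<omega>" "(\<Sum>i<n. E (k + i) \<omega> / jump_rate w \<mu> (Y (k + i) \<omega>)) \<le> L"
    unfolding sojourn_event_def by auto
  then obtain ys where ys: "ys \<in> walks w y n" "\<forall>i\<le>n. Y (k + i) \<omega> = ys ! i"
    using walks_iff[of "\<lambda>i. Y (k + i) \<omega>" y n w] by auto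
  then have "\<omega> \<in> walk_sojourn_event k ys n L"
    using \<omega> unfolding walk_sojourn_event_def walk_event_def by auto
  with ys show "\<omega> \<in> (\<Union>ys\<in>walks w y n. walk_sojourn_event k ys n L)" by blast
next
  fix \<omega> assume "\<omega> \<in> (\<Union>ys\<in>walks w y n. walk_sojourn_event k ys n L)"
  then obtain ys where ys: "ys \<in> walks w y n" and \<omega>: "\<omega> \<in> walk_sojourn_event k ys n L" by blast
  then have Y: "\<forall>i\<le>n. Y (k + i) \<omega> = ys ! i"
    unfolding walk_sojourn_event_def walk_event_def by blast
  then have "Y (k + 0) \<omega> = y \<and> (\<forall>i<n. 0 < w (Y (k + i) \<omega>) (Y (k + Suc i) \<omega>))"
    using walks_iff[of "\<lambda>i. Y (k + i) \<omega>" y n w] ys by auto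
  then show "\<omega> \<in> sojourn_event k y n L"
    using \<omega> Y unfolding sojourn_event_def walk_sojourn_event_def walk_event_def by auto
qed

lemma sojourn_event_sets[measurable]: "sojourn_event k y n L \<in> sets M"
  unfolding sojourn_event_eq_UN_walks by (intro sets.finite_UN finite_walks walk_sojourn_event_sets)

lemma prob_sojourn_event:
  assumes "A \<in> sets M"
  shows "prob (A \<inter> sojourn_event k y n L) = (\<Sum>ys\<in>walks w y n. prob (A \<inter> walk_sojourn_event k ys n L))"
proof -
  have "disjoint_family_on (\<lambda>ys. A \<inter> walk_sojourn_event k ys n L) (walks w y n)"
    unfolding disjoint_family_on_def walk_sojourn_event_def walk_event_def
    by (auto dest: walks_eqI)
  then show ?thesis
    unfolding sojourn_event_eq_UN_walks Int_UN_distrib using assms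
    by (intro finite_measure_finite_Union finite_walks) auto
qed

lemma sojourn_event_Suc_subset:
  assumes "y \<in> V"
  shows "sojourn_event k y (Suc n) L \<subseteq> sojourn_event k y n L"
proof
  fix \<omega> assume \<omega>: "\<omega> \<in> sojourn_event k y (Suc n) L"
  have "Y (k + n) \<omega> \<in> V"
  proof (cases n)
    case 0
    then show ?thesis using \<omega> assms by (simp add: sojourn_event_def)
  next
    case (Suc m)
    then have "0 < w (Y (k + m) \<omega>) (Y (k + n) \<omega>)" using \<omega> by (simp add: sojourn_event_def)
    then show ?thesis using in_V_if_weight_pos by blast
  qed
  then have "0 \<le> E (k + n) \<omega> / jump_rate w \<mu> (Y (k + n) \<omega>)"
    using \<omega> jump_rate_pos by (simp add: sojourn_event_def less_imp_le)
  then show "\<omega> \<in> sojourn_event k y n L"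
    using \<omega> by (simp add: sojourn_event_def)
qed

text \<open>A path that stays in all \<open>sojourn_event k y n L\<close> explodes by time \<open>jump_time k + L\<close>.\<close>

lemma null_sets_INT_sojourn_event:
  assumes "AE \<omega> in M. lifetime w \<mu> Y E \<omega> = \<infinity>"
  shows "(\<Inter>n. sojourn_event k y n L) \<in> null_sets M"
proof -
  have "AE \<omega> in M. \<omega> \<notin> (\<Inter>n. sojourn_event k y n L)"
    using assms AE_walk
  proof eventually_elim
    case (elim \<omega>)
    then have "0 < E i \<omega>" "Y i \<omega> \<in> V" for i
      using in_V_if_walk[of "\<lambda>i. Y i \<omega>"] start_in_V by auto
    then have "0 \<le> E i \<omega> / jump_rate w \<mu> (Y i \<omega>)" for i
      using jump_rate_pos[of "Y i \<omega>"] by (simp add: less_imp_le)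
    moreover
    have "(\<Sum>i<n. E (k + i) \<omega> / jump_rate w \<mu> (Y (k + i) \<omega>)) \<le> L"
      if "\<omega> \<in> (\<Inter>n. sojourn_event k y n L)" for n
      using that unfolding sojourn_event_def by blast
    ultimately have "\<omega> \<in> (\<Inter>n. sojourn_event k y n L) \<Longrightarrow>
        lifetime w \<mu> Y E \<omega> \<le> ereal (jump_time w \<mu> Y E k \<omega> + L)"
      by (rule lifetime_le_if_sojourns_bounded)
    then show ?case using elim by force
  qed
  moreover have "(\<Inter>n. sojourn_event k y n L) \<in> sets M"
    by (intro sets.countable_INT) auto
  ultimately show ?thesis
    using AE_iff_null_sets by blast
qed

end

lemma all_nth_append_tl_iff:
  assumes "length p = Suc k" "length ys = Suc n" "ys ! 0 = p ! k"
  shows "(\<forall>i\<le>k + n. y i = (p @ tl ys) ! i) \<longleftrightarrow> (\<forall>i\<le>k. y i = p ! i) \<and> (\<forall>i\<le>n. y (k + i) = ys ! i)"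
proof -
  have nth: "(p @ tl ys) ! i = (if i \<le> k then p ! i else ys ! (i - k))" if "i \<le> k + n" for i
    using assms that by (auto simp: nth_append nth_tl Suc_diff_Suc)
  show ?thesis
  proof (intro iffI conjI allI impI)
    fix i assume "\<forall>i\<le>k + n. y i = (p @ tl ys) ! i" "i \<le> n"
    then show "y (k + i) = ys ! i"
      using nth[of "k + i"] assms(3) by (cases i) auto
  next
    fix i assume "(\<forall>i\<le>k. y i = p ! i) \<and> (\<forall>i\<le>n. y (k + i) = ys ! i)" "i \<le> k + n"
    then show "y i = (p @ tl ys) ! i"
      using nth[of i] by (cases "i \<le> k") (auto dest: spec[of _ "i - k"])
  qed (use nth in auto)
qed

lemma pos_and_shifted_thresholds_iff:
  fixes e a :: "nat \<Rightarrow> real"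
  shows "(\<forall>i<k + n. 0 < e i) \<and> (\<forall>i\<in>{..<n}. a i < e (k + i)) \<longleftrightarrow>
    (\<forall>i<k + n. (if i < k then 0 else max 0 (a (i - k))) < e i)"
proof
  assume H: "(\<forall>i<k + n. 0 < e i) \<and> (\<forall>i\<in>{..<n}. a i < e (k + i))"
  show "\<forall>i<k + n. (if i < k then 0 else max 0 (a (i - k))) < e i"
  proof (intro allI impI)
    fix i assume i: "i < k + n"
    show "(if i < k then 0 else max 0 (a (i - k))) < e i"
    proof (cases "i < k")
      case False
      then have "i - k \<in> {..<n}" using i by auto
      then have "a (i - k) < e (k + (i - k))" using H by blast
      then show ?thesis using H i False by simp
    qed (use H i in simp)
  qed
next
  assume H: "\<forall>i<k + n. (if i < k then 0 else max 0 (a (i - k))) < e i"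
  have "0 < e i" if "i < k + n" for i
  proof -
    have "0 \<le> (if i < k then 0 else max 0 (a (i - k)))" by simp
    from this H[rule_format, OF that] show ?thesis by (rule le_less_trans)
  qed
  moreover have "a i < e (k + i)" if "i < n" for i
    using H[rule_format, of "k + i"] that by simp
  ultimately show "(\<forall>i<k + n. 0 < e i) \<and> (\<forall>i\<in>{..<n}. a i < e (k + i))" by blast
qed

locale chains_linked_by_path =
  A: chain_from V w \<mu> xb M1 Y1 E1 + B: chain_from V w \<mu> x M2 Y2 E2
  for V :: "'a set" and w \<mu> xb and M1 :: "'w measure" and Y1 E1 x and M2 :: "'v measure" and Y2 E2 +
  fixes p :: "'a list" and k :: nat
  assumes path: "length p = Suc k" "hd p = xb" "last p = x" "0 < path_prob w xb p"
begin

definition prefix_event :: "'w set" where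
  "prefix_event = {\<omega>\<in>space M1. \<forall>i\<le>k. Y1 i \<omega> = p ! i}"

lemma prefix_event_sets[measurable]: "prefix_event \<in> sets M1"
  unfolding prefix_event_def by measurable

lemma path_end: "p ! k = x"
  using path by (cases p rule: rev_cases) (auto simp: nth_append)

text \<open>Markov property at the \<open>k\<close>-th jump, tested on orthants of the holding times: both sides
  are instances of the cylinder formula.\<close>

lemma prob_prefix_walk_orthant:
  assumes ys: "ys \<in> walks w x n"
  shows "A.prob {\<omega>\<in>prefix_event \<inter> A.walk_event k ys n. \<forall>i\<in>{..<n}. a i < E1 (k + i) \<omega>}
       = path_prob w xb p * B.prob {\<omega>\<in>B.walk_event 0 ys n. \<forall>i\<in>{..<n}. a i < E2 i \<omega>}"
proof -
  have ys_len: "length ys = Suc n" using ys by (simp add: walks_def)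
  then have "ys \<noteq> []" by auto
  then have ys_hd: "ys ! 0 = p ! k"
    using ys path_end by (simp add: walks_def hd_conv_nth[symmetric])
  define t1 where "t1 i = (if i < k then 0 else max 0 (a (i - k)))" for i
  define t2 where "t2 i = max 0 (a i)" for i
  have E_iff: "(\<forall>i<k + n. 0 < E1 i \<omega>) \<and> (\<forall>i\<in>{..<n}. a i < E1 (k + i) \<omega>) \<longleftrightarrow> (\<forall>i<k + n. t1 i < E1 i \<omega>)"
    for \<omega>
    unfolding t1_def by (rule pos_and_shifted_thresholds_iff)
  have Y_iff: "(\<forall>i\<le>k. Y1 i \<omega> = p ! i) \<and> (\<forall>i\<le>n. Y1 (k + i) \<omega> = ys ! i) \<longleftrightarrow>
      (\<forall>i\<le>k + n. Y1 i \<omega> = (p @ tl ys) ! i)" for \<omega>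
    by (rule all_nth_append_tl_iff[OF path(1) ys_len ys_hd, symmetric])
  have set1: "{\<omega>\<in>prefix_event \<inter> A.walk_event k ys n. \<forall>i\<in>{..<n}. a i < E1 (k + i) \<omega>}
      = {\<omega>\<in>space M1. (\<forall>i\<le>k + n. Y1 i \<omega> = (p @ tl ys) ! i) \<and> (\<forall>i<k + n. t1 i < E1 i \<omega>)}"
    (is "?L = ?R")
  proof (intro set_eqI)
    fix \<omega>
    have "\<omega> \<in> ?L \<longleftrightarrow> \<omega> \<in> space M1 \<and> ((\<forall>i\<le>k. Y1 i \<omega> = p ! i) \<and> (\<forall>i\<le>n. Y1 (k + i) \<omega> = ys ! i))
        \<and> ((\<forall>i<k + n. 0 < E1 i \<omega>) \<and> (\<forall>i\<in>{..<n}. a i < E1 (k + i) \<omega>))"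
      unfolding prefix_event_def A.walk_event_def by blast
    also have "\<dots> \<longleftrightarrow> \<omega> \<in> ?R"
      unfolding Y_iff E_iff by simp
    finally show "\<omega> \<in> ?L \<longleftrightarrow> \<omega> \<in> ?R" .
  qed
  have cyl1: "A.prob ?R = path_prob w xb (p @ tl ys) * exp (- (\<Sum>i<k + n. t1 i))"
    using path(1) ys_len by (intro A.prob_cylinder) (auto simp: t1_def)
  have concat: "path_prob w xb (p @ tl ys) = path_prob w xb p * path_prob w x ys"
  proof -
    have "p \<noteq> []" using path(1) by auto
    then show ?thesis
      using path ys_len ys_hd path_end A.path_prob_append[of p xb "tl ys"] by (cases ys) auto
  qed
  have sums: "(\<Sum>i<k + n. t1 i) = (\<Sum>i<n. t2 i)"
    by (induction n) (simp_all add: t1_def t2_def)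
  have cyl2: "B.prob {\<omega>\<in>space M2. (\<forall>i\<le>n. Y2 i \<omega> = ys ! i) \<and> (\<forall>i<n. t2 i < E2 i \<omega>)}
      = path_prob w x ys * exp (- (\<Sum>i<n. t2 i))"
    using ys_len by (intro B.prob_cylinder) (auto simp: t2_def)
  have set2: "{\<omega>\<in>B.walk_event 0 ys n. \<forall>i\<in>{..<n}. a i < E2 i \<omega>}
      = {\<omega>\<in>space M2. (\<forall>i\<le>n. Y2 i \<omega> = ys ! i) \<and> (\<forall>i<n. t2 i < E2 i \<omega>)}"
    unfolding B.walk_event_def t2_def by auto
  show ?thesis
    unfolding set1 set2 cyl1 cyl2 concat sums by simp
qed

lemma prob_prefix_walk_sojourn:
  assumes ys: "ys \<in> walks w x n"
  shows "A.prob (prefix_event \<inter> A.walk_sojourn_event k ys n L)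
       = path_prob w xb p * B.prob (B.walk_sojourn_event 0 ys n L)"
proof -
  define g where "g e = (\<Sum>i<n. e i / jump_rate w \<mu> (ys ! i))" for e :: "nat \<Rightarrow> real"
  let ?S = "{e \<in> space (\<Pi>\<^sub>M i\<in>{..<n}. borel). g e \<le> L}"
  have "?S \<in> sets (\<Pi>\<^sub>M i\<in>{..<n}. borel)"
    unfolding g_def by measurable
  then have "A.prob {\<omega>\<in>prefix_event \<inter> A.walk_event k ys n. (\<lambda>i\<in>{..<n}. E1 (k + i) \<omega>) \<in> ?S}
      = path_prob w xb p * B.prob {\<omega>\<in>B.walk_event 0 ys n. (\<lambda>i\<in>{..<n}. E2 i \<omega>) \<in> ?S}"
    using prob_prefix_walk_orthant[OF ys] A.path_prob_nonneg
    by (intro measure_vimage_eqI_upper_orthants A.finite_measure_axioms B.finite_measure_axioms) simp_all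
  moreover have "{\<omega>\<in>prefix_event \<inter> A.walk_event k ys n. (\<lambda>i\<in>{..<n}. E1 (k + i) \<omega>) \<in> ?S}
      = prefix_event \<inter> A.walk_sojourn_event k ys n L"
    unfolding A.walk_sojourn_event_def g_def by (auto simp: space_PiM)
  moreover have "{\<omega>\<in>B.walk_event 0 ys n. (\<lambda>i\<in>{..<n}. E2 i \<omega>) \<in> ?S} = B.walk_sojourn_event 0 ys n L"
    unfolding B.walk_sojourn_event_def g_def by (auto simp: space_PiM)
  ultimately show ?thesis by simp
qed

lemma prob_prefix_sojourn:
  "A.prob (prefix_event \<inter> A.sojourn_event k x n L) = path_prob w xb p * B.prob (B.sojourn_event 0 x n L)"
proof -
  have "B.prob (B.sojourn_event 0 x n L) = (\<Sum>ys\<in>walks w x n. B.prob (B.walk_sojourn_event 0 ys n L))"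
    using B.prob_sojourn_event[of "space M2" 0 x n L] by (simp add: Int_absorb1 sets.sets_into_space)
  then show ?thesis
    by (simp add: A.prob_sojourn_event prob_prefix_walk_sojourn sum_distrib_left)
qed

lemma null_sets_INT_sojourn_event_transfer:
  assumes "AE \<omega> in M1. lifetime w \<mu> Y1 E1 \<omega> = \<infinity>"
  shows "(\<Inter>n. B.sojourn_event 0 x n L) \<in> null_sets M2"
proof -
  let ?Q = "\<lambda>n. prefix_event \<inter> A.sojourn_event k x n L"
  have "decseq ?Q"
    using A.sojourn_event_Suc_subset[OF B.start_in_V] by (intro decseq_SucI) blast
  then have "(\<lambda>n. A.prob (?Q n)) \<longlonglongrightarrow> A.prob (\<Inter>n. ?Q n)"
    by (intro A.finite_Lim_measure_decseq) auto
  moreover have "(\<Inter>n. ?Q n) \<in> null_sets M1"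
    using A.null_sets_INT_sojourn_event[OF assms, of k x L]
    by (rule null_sets_subset) (auto intro: sets.countable_INT)
  then have "A.prob (\<Inter>n. ?Q n) = 0"
    by (simp add: measure_def null_setsD1 del: INT_simps)
  ultimately have "(\<lambda>n. path_prob w xb p * B.prob (B.sojourn_event 0 x n L)) \<longlonglongrightarrow> 0"
    by (simp add: prob_prefix_sojourn)
  then have "(\<lambda>n. B.prob (B.sojourn_event 0 x n L)) \<longlonglongrightarrow> 0"
    using tendsto_divide[OF _ tendsto_const, of _ 0 sequentially "path_prob w xb p"] path(4) by simp
  moreover have "B.prob (\<Inter>n. B.sojourn_event 0 x n L) \<le> B.prob (B.sojourn_event 0 x n L)" for n
    by (intro B.finite_measure_mono) auto
  ultimately have "B.prob (\<Inter>n. B.sojourn_event 0 x n L) \<le> 0"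
    by (intro LIMSEQ_le_const) auto
  then show ?thesis
    by (auto simp: null_sets_def B.emeasure_eq_measure intro: sets.countable_INT antisym)
qed

lemma AE_lifetime_infinite_transfer:
  assumes "AE \<omega> in M1. lifetime w \<mu> Y1 E1 \<omega> = \<infinity>"
  shows "AE \<omega> in M2. lifetime w \<mu> Y2 E2 \<omega> = \<infinity>"
proof -
  have "AE \<omega> in M2. \<forall>L::nat. \<omega> \<notin> (\<Inter>n. B.sojourn_event 0 x n (real L))"
    using AE_not_in[OF null_sets_INT_sojourn_event_transfer[OF assms]] by (subst AE_all_countable) blast
  then show ?thesis
    using B.AE_walk AE_space[where M = M2]
  proof eventually_elim
    case (elim \<omega>)
    show ?case
    proof (rule ccontr)
      assume "lifetime w \<mu> Y2 E2 \<omega> \<noteq> \<infinity>"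
      moreover have "ereal 0 \<le> lifetime w \<mu> Y2 E2 \<omega>"
        using jump_time_le_lifetime[of w \<mu> Y2 E2 0 \<omega>] by (simp add: jump_time_def)
      ultimately obtain r where r: "lifetime w \<mu> Y2 E2 \<omega> = ereal r"
        by (cases "lifetime w \<mu> Y2 E2 \<omega>") auto
      obtain L :: nat where L: "r \<le> real L" using real_arch_simple by blast
      have "jump_time w \<mu> Y2 E2 n \<omega> \<le> real L" for n
        using jump_time_le_lifetime[of w \<mu> Y2 E2 n \<omega>] r L by simp
      then have "\<omega> \<in> B.sojourn_event 0 x n (real L)" for n
        using elim unfolding B.sojourn_event_def jump_time_def by simp
      then show False using elim by blast
    qed
  qed
qed

end

theorem lemma2p4:
  fixes V :: "'a set" and w :: "'a \<Rightarrow> 'a \<Rightarrow> real" and \<mu> :: "'a \<Rightarrow> real"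
    and d :: "'a \<Rightarrow> 'a \<Rightarrow> real" and xbar :: 'a
    and M :: "'a \<Rightarrow> 'w measure" and Y :: "'a \<Rightarrow> nat \<Rightarrow> 'w \<Rightarrow> 'a"
    and E :: "'a \<Rightarrow> nat \<Rightarrow> 'w \<Rightarrow> real" and R :: "real \<Rightarrow> real"
  assumes "simple_weighted_graph V w \<mu>"
    and "discrete_metric_on V d"
    and "xbar \<in> V"
    and "\<forall>x\<in>V. \<forall>r. finite {y \<in> V. d x y \<le> r}"
    and "\<forall>x\<in>V. minimal_chain V w \<mu> x (M x) (Y x) (E x)"
    and "upper_rate_function w \<mu> d xbar (M xbar) (Y xbar) (E xbar) R"
  shows "conservative_chain V w \<mu> M Y E"
  unfolding conservative_chain_def
proof
  fix x assume "x \<in> V"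
  interpret xbar: chain_from V w \<mu> xbar "M xbar" "Y xbar" "E xbar"
    using assms by unfold_locales auto
  have conservative_xbar: "AE \<omega> in M xbar. lifetime w \<mu> (Y xbar) (E xbar) \<omega> = \<infinity>"
    using assms by (intro xbar.AE_lifetime_infinite_if_upper_rate) auto
  obtain p where p: "p \<noteq> []" "hd p = xbar" "last p = x" "0 < path_prob w xbar p"
    using xbar.exists_path_prob_pos[OF \<open>xbar \<in> V\<close> \<open>x \<in> V\<close>] by blast
  then interpret chains_linked_by_path V w \<mu> xbar "M xbar" "Y xbar" "E xbar" x "M x" "Y x" "E x" p "length p - 1"
    using assms \<open>x \<in> V\<close> by unfold_locales auto
  show "AE \<omega> in M x. lifetime w \<mu> (Y x) (E x) \<omega> = \<infinity>"
    by (rule AE_lifetime_infinite_transfer[OF conservative_xbar])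
qed

end
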